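(* Let $q$ be a prime power and $n\ge 1$. Suppose $\frac{n(q-1)}{2}\le k\le n(q-1)$, $2k\equiv 0\pmod{q-1}$, and $k\not\equiv 0\pmod{q-1}$. Then $(C_{n,k}^q)^\perp$ is self-orthogonal. Equivalently, for every odd integer $r$ with $n\le r<2n$ (and $q$ odd), the code $(C_{n,r(q-1)/2}^q)^\perp$ is self-orthogonal.
   Context: For a prime power $q$ and integers $n\ge 1$, $k\ge 0$, the projective Reed-Muller code $C_{n,k}^q\subseteq \mathbb{F}_q^N$, $N=\frac{q^{n+1}-1}{q-1}$, is defined as follows. For each point of $\mathbb{P}^n(\mathbb{F}_q)$ choose the affine representative $(p_0,\dots,p_n)\in\mathbb{F}_q^{n+1}\setminus\{0\}$ whose left-most nonzero coordinate equals $1$, and fix an ordering $P_1',\dots,P_N'$ of these representatives. Then $C_{n,k}^q=\{(F(P_1'),\dots,F(P_N')) : F\in \mathbb{F}_q[x_0,\dots,x_n]_k\}$, where $\mathbb{F}_q[x_0,\dots,x_n]_k$ is the space of homogeneous polynomials of degree $k$ together with $0$. Duals are taken with respect to the standard dot product; a code $C$ is self-orthogonal if $C\subseteq C^\perp$. *)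

theory Defs
  imports Main
begin

text \<open>Points of P^n(F_q): normalized affine representatives, i.e. vectors
  p :: nat => 'a supported on {0..n}, nonzero, whose left-most nonzero
  coordinate equals 1.\<close>
definition proj_points :: "nat \<Rightarrow> (nat \<Rightarrow> 'a::field) set" where
  "proj_points n = {p. (\<forall>i>n. p i = 0) \<and>
      (\<exists>j\<le>n. p j = 1 \<and> (\<forall>i<j. p i = 0))}"

definition monomials :: "nat \<Rightarrow> nat \<Rightarrow> (nat \<Rightarrow> nat) set" where
  "monomials n k = {e. (\<forall>i>n. e i = 0) \<and> (\<Sum>i\<le>n. e i) = k}"

definition hom_eval :: "nat \<Rightarrow> nat \<Rightarrow> ((nat \<Rightarrow> nat) \<Rightarrow> 'a::field) \<Rightarrow> (nat \<Rightarrow> 'a) \<Rightarrow> 'a" where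
  "hom_eval n k a p = (\<Sum>e\<in>monomials n k. a e * (\<Prod>i\<le>n. p i ^ e i))"

text \<open>Vectors of F_q^N are functions on proj_points n (zero elsewhere).\<close>
definition proj_RM :: "nat \<Rightarrow> nat \<Rightarrow> ((nat \<Rightarrow> 'a::field) \<Rightarrow> 'a) set" where
  "proj_RM n k = {c. \<exists>a. c = (\<lambda>p. if p \<in> proj_points n then hom_eval n k a p else 0)}"

definition dotp :: "nat \<Rightarrow> ((nat \<Rightarrow> 'a::field) \<Rightarrow> 'a) \<Rightarrow> ((nat \<Rightarrow> 'a) \<Rightarrow> 'a) \<Rightarrow> 'a" where
  "dotp n u v = (\<Sum>p\<in>proj_points n. u p * v p)"

definition dual_code :: "nat \<Rightarrow> ((nat \<Rightarrow> 'a::field) \<Rightarrow> 'a) set \<Rightarrow> ((nat \<Rightarrow> 'a) \<Rightarrow> 'a) set" where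
  "dual_code n C = {v. (\<forall>p. p \<notin> proj_points n \<longrightarrow> v p = 0) \<and> (\<forall>c\<in>C. dotp n v c = 0)}"

definition self_orthogonal :: "nat \<Rightarrow> ((nat \<Rightarrow> 'a::field) \<Rightarrow> 'a) set \<Rightarrow> bool" where
  "self_orthogonal n C \<longleftrightarrow> C \<subseteq> dual_code n C"

end

theory Submission
  imports Defs "HOL-Library.Cardinality" "HOL-Library.FuncSet" "HOL-Computational_Algebra.Polynomial"
begin

text \<open>Write Q = q - 1 and C for the code. We show that the dual of C is contained in C,
  so that it lies in its own dual. A word v of the dual is interpolated through the points,
  v(x) = sum over P of v(P) [x = P], using [x = P] = sum over c \<noteq> 0 of c^k prod_i [x_i = c P_i]
  and [a = b] = 1 - sum over t < q of a^t b^(Q - t). Expanding, v becomes a combination of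
  monomials x^alpha with coefficients (sum over c \<noteq> 0 of c^(k + |beta|)) (sum over P of v(P) P^beta),
  beta complementary to alpha. The character sum vanishes unless Q divides k + |beta|; as Q divides
  2k, Q then divides k - |beta|, so for |beta| \<le> k the monomial P^beta agrees on all of F_q^(n+1) with
  one of degree k and the moment of v vanishes. For the surviving terms |beta| > k, while
  |alpha| + |beta| is a multiple of Q of size at most (n + 1) Q \<le> 2k + Q; hence 0 < |alpha| \<le> k and
  Q divides k - |alpha|, so x^alpha is again the evaluation of a monomial of degree k.\<close>

subsection \<open>Finite fields\<close>

lemma of_nat_CARD_eq_0: "of_nat CARD('a) = (0::'a::{finite,field})"
proof -
  have shift: "bij_betw (\<lambda>x::'a. x + 1) UNIV UNIV"
    by (rule bij_betwI[where g="\<lambda>x. x - 1"]) auto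
  have "(\<Sum>x\<in>(UNIV::'a set). x) = (\<Sum>x\<in>UNIV. x + 1)"
    using sum.reindex_bij_betw[OF shift, of "\<lambda>x. x"] by simp
  also have "\<dots> = (\<Sum>x\<in>UNIV. x) + of_nat CARD('a)"
    by (simp add: sum.distrib)
  finally show ?thesis by simp
qed

lemma CARD_field_ge_2: "card (UNIV :: 'a::{finite,field} set) \<ge> 2"
proof -
  have "card {0::'a, 1} \<le> CARD('a)" by (rule card_mono) auto
  thus ?thesis by simp
qed

lemma power_CARD_minus_1:
  fixes x :: "'a::{finite,field}"
  assumes "x \<noteq> 0"
  shows "x ^ (CARD('a) - 1) = 1"
proof -
  let ?N = "UNIV - {0::'a}"
  have scale: "bij_betw (\<lambda>y. x * y) ?N ?N"
    by (rule bij_betwI[where g="\<lambda>y. y / x"]) (use assms in auto)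
  have "(\<Prod>y\<in>?N. y) = (\<Prod>y\<in>?N. x * y)"
    using prod.reindex_bij_betw[OF scale, of "\<lambda>y. y"] by simp
  also have "\<dots> = x ^ (CARD('a) - 1) * (\<Prod>y\<in>?N. y)"
    by (simp add: prod.distrib card_Diff_singleton)
  finally show ?thesis by simp
qed

lemma power_mult_CARD_minus_1:
  fixes x :: "'a::{finite,field}"
  assumes "x \<noteq> 0"
  shows "x ^ ((CARD('a) - 1) * j) = 1"
  using power_CARD_minus_1[OF assms] by (simp add: power_mult)

lemma power_CARD:
  fixes x :: "'a::{finite,field}"
  shows "x ^ CARD('a) = x"
proof (cases "x = 0")
  case True
  thus ?thesis using CARD_field_ge_2[where 'a='a] by simp
next
  case False
  have "CARD('a) = Suc (CARD('a) - 1)" using CARD_field_ge_2[where 'a='a] by simp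
  hence "x ^ CARD('a) = x * x ^ (CARD('a) - 1)" by (metis power_Suc)
  thus ?thesis using power_CARD_minus_1[OF False] by simp
qed

lemma eq_indicator_field:
  fixes a b :: "'a::{finite,field}"
  shows "(if a = b then 1 else 0) = 1 - (\<Sum>t<CARD('a). a ^ t * b ^ (CARD('a) - 1 - t))"
proof (cases "a = b")
  case True
  have "(\<Sum>t<CARD('a). a ^ t * b ^ (CARD('a) - 1 - t)) = (\<Sum>t<CARD('a). a ^ (CARD('a) - 1))"
    using True by (intro sum.cong) (auto simp flip: power_add)
  also have "\<dots> = 0" using of_nat_CARD_eq_0[where 'a='a] by simp
  finally show ?thesis using True by simp
next
  case False
  have "a ^ CARD('a) - b ^ CARD('a)
      = (a - b) * (\<Sum>i<CARD('a). b ^ (CARD('a) - Suc i) * a ^ i)"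
    by (rule power_diff_sumr2)
  also have "(\<Sum>i<CARD('a). b ^ (CARD('a) - Suc i) * a ^ i)
      = (\<Sum>t<CARD('a). a ^ t * b ^ (CARD('a) - 1 - t))"
    by (intro sum.cong) (auto simp: mult.commute)
  finally have "a - b = (a - b) * (\<Sum>t<CARD('a). a ^ t * b ^ (CARD('a) - 1 - t))"
    by (simp add: power_CARD)
  thus ?thesis using False by simp
qed

lemma ex_nonzero_power_neq_1:
  assumes "0 < t" "t < card (UNIV :: 'a::{finite,field} set) - 1"
  shows "\<exists>c::'a. c \<noteq> 0 \<and> c ^ t \<noteq> 1"
proof (rule ccontr)
  assume "\<not> ?thesis"
  hence roots: "UNIV - {0} \<subseteq> {x::'a. poly (monom 1 t - 1) x = 0}"
    by (auto simp: poly_monom)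
  have "coeff (monom (1::'a) t - 1) t = 1" using assms(1) by simp
  hence "monom (1::'a) t - 1 \<noteq> 0" by (metis coeff_0 zero_neq_one)
  hence "card {x::'a. poly (monom 1 t - 1) x = 0} \<le> degree (monom (1::'a) t - 1)"
    by (rule card_poly_roots_bound)
  also have "\<dots> \<le> t" by (metis degree_diff_le degree_1 degree_monom_le le0)
  finally have "card (UNIV - {0::'a}) \<le> t" using card_mono[OF _ roots] by fastforce
  thus False using assms(2) by (simp add: card_Diff_singleton)
qed

lemma sum_nonzero_power_eq_0:
  assumes "\<not> (card (UNIV :: 'a::{finite,field} set) - 1) dvd t"
  shows "(\<Sum>c\<in>UNIV - {0::'a}. c ^ t) = 0"
proof -
  let ?Q = "CARD('a) - 1"
  let ?N = "UNIV - {0::'a}"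
  have "?Q > 0" using CARD_field_ge_2[where 'a='a] by simp
  moreover have "t mod ?Q > 0" using assms by (simp add: dvd_eq_mod_eq_0)
  ultimately obtain c0 :: 'a where c0: "c0 \<noteq> 0" "c0 ^ (t mod ?Q) \<noteq> 1"
    using ex_nonzero_power_neq_1[of "t mod ?Q", where 'a='a] by auto
  have "c0 ^ t = c0 ^ (?Q * (t div ?Q)) * c0 ^ (t mod ?Q)"
    by (metis div_mult_mod_eq mult.commute power_add)
  hence c0t: "c0 ^ t \<noteq> 1" using c0 power_mult_CARD_minus_1[OF c0(1)] by simp
  have scale: "bij_betw (\<lambda>y. c0 * y) ?N ?N"
    by (rule bij_betwI[where g="\<lambda>y. y / c0"]) (use c0 in auto)
  have "(\<Sum>c\<in>?N. c ^ t) = (\<Sum>c\<in>?N. (c0 * c) ^ t)"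
    using sum.reindex_bij_betw[OF scale, of "\<lambda>y. y ^ t"] by simp
  also have "\<dots> = c0 ^ t * (\<Sum>c\<in>?N. c ^ t)"
    by (simp add: sum_distrib_left power_mult_distrib)
  finally have "(1 - c0 ^ t) * (\<Sum>c\<in>?N. c ^ t) = 0" by (simp add: algebra_simps)
  thus ?thesis using c0t by simp
qed

subsection \<open>Expansion of the coordinatewise equality indicator\<close>

text \<open>Write [a = b] as the sum of summand u over u \<le> q, where u = q stands for the summand 1
  and u < q for the summand -a^u b^(q-1-u). Expanding the product over i \<le> n gives one term per
  index vector s, whose exponents of x and y are recorded below.\<close>

definition left_exp :: "nat \<Rightarrow> nat \<Rightarrow> (nat \<Rightarrow> nat) \<Rightarrow> nat \<Rightarrow> nat" where
  "left_exp q n s i = (if i \<le> n \<and> s i < q then s i else 0)"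

definition right_exp :: "nat \<Rightarrow> nat \<Rightarrow> (nat \<Rightarrow> nat) \<Rightarrow> nat \<Rightarrow> nat" where
  "right_exp q n s i = (if i \<le> n \<and> s i < q then q - 1 - s i else 0)"

definition expansion_sign :: "nat \<Rightarrow> nat \<Rightarrow> (nat \<Rightarrow> nat) \<Rightarrow> 'a::field" where
  "expansion_sign q n s = (\<Prod>i\<le>n. if s i < q then -1 else 1)"

lemma prod_eq_indicator_expansion:
  fixes x y :: "nat \<Rightarrow> 'a::{finite,field}"
  defines "q \<equiv> CARD('a)"
  shows "(\<Prod>i\<le>n. if x i = y i then 1 else 0) =
    (\<Sum>s\<in>PiE {..n} (\<lambda>_. {..q}).
      expansion_sign q n s * (\<Prod>i\<le>n. x i ^ left_exp q n s i) * (\<Prod>i\<le>n. y i ^ right_exp q n s i))"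
proof -
  define summand where
    "summand = (\<lambda>u (a::'a) b. if u < q then - (a ^ u * b ^ (q - 1 - u)) else 1)"
  have "(\<Prod>i\<le>n. if x i = y i then (1::'a) else 0) = (\<Prod>i\<le>n. \<Sum>u\<le>q. summand u (x i) (y i))"
  proof (intro prod.cong refl)
    fix i
    have "{..q} = insert q {..<q}" by auto
    hence "(\<Sum>u\<le>q. summand u (x i) (y i)) = 1 - (\<Sum>u<q. x i ^ u * y i ^ (q - 1 - u))"
      by (simp add: summand_def sum_negf)
    thus "(if x i = y i then 1 else 0) = (\<Sum>u\<le>q. summand u (x i) (y i))"
      unfolding q_def by (simp add: eq_indicator_field)
  qed
  also have "\<dots> = (\<Sum>s\<in>PiE {..n} (\<lambda>_. {..q}). \<Prod>i\<le>n. summand (s i) (x i) (y i))"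
    by (rule prod_sum_PiE) auto
  also have "\<dots> = (\<Sum>s\<in>PiE {..n} (\<lambda>_. {..q}).
      expansion_sign q n s * (\<Prod>i\<le>n. x i ^ left_exp q n s i) * (\<Prod>i\<le>n. y i ^ right_exp q n s i))"
  proof (intro sum.cong refl)
    fix s
    have "(\<Prod>i\<le>n. summand (s i) (x i) (y i)) =
      (\<Prod>i\<le>n. (if s i < q then -1 else 1) * x i ^ left_exp q n s i * y i ^ right_exp q n s i)"
      by (intro prod.cong refl) (auto simp: summand_def left_exp_def right_exp_def)
    thus "(\<Prod>i\<le>n. summand (s i) (x i) (y i)) = expansion_sign q n s *
        (\<Prod>i\<le>n. x i ^ left_exp q n s i) * (\<Prod>i\<le>n. y i ^ right_exp q n s i)"
      by (simp add: prod.distrib expansion_sign_def)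
  qed
  finally show ?thesis .
qed

lemma sum_left_exp_plus_sum_right_exp:
  assumes "q > 0"
  shows "(\<Sum>i\<le>n. left_exp q n s i) + (\<Sum>i\<le>n. right_exp q n s i)
    = (q - 1) * card {i. i \<le> n \<and> s i < q}"
proof -
  have "(\<Sum>i\<le>n. left_exp q n s i) + (\<Sum>i\<le>n. right_exp q n s i)
      = (\<Sum>i\<le>n. if s i < q then q - 1 else 0)"
    unfolding sum.distrib[symmetric] left_exp_def right_exp_def
    by (intro sum.cong refl) (use assms in auto)
  also have "\<dots> = (\<Sum>i\<in>{i. i \<le> n \<and> s i < q}. q - 1)"
    by (simp add: sum.If_cases Int_def)
  finally show ?thesis by simp
qed

lemma finite_proj_points: "finite (proj_points n :: (nat \<Rightarrow> 'a::{finite,field}) set)"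
proof (rule finite_subset)
  show "proj_points n \<subseteq>
      {f::nat \<Rightarrow> 'a. \<forall>i. (i \<in> {..n} \<longrightarrow> f i \<in> UNIV) \<and> (i \<notin> {..n} \<longrightarrow> f i = 0)}"
    unfolding proj_points_def by auto
  show "finite
      {f::nat \<Rightarrow> 'a. \<forall>i. (i \<in> {..n} \<longrightarrow> f i \<in> UNIV) \<and> (i \<notin> {..n} \<longrightarrow> f i = 0)}"
    by (rule finite_set_of_finite_funs) auto
qed

lemma proj_points_scale_eq_1:
  assumes "x \<in> proj_points n" "P \<in> proj_points n" and scaled: "x = (\<lambda>i. c * P i)"
  shows "c = 1"
proof -
  obtain j where j: "x j = 1" "\<forall>i<j. x i = 0" using assms(1) unfolding proj_points_def by auto
  obtain l where l: "P l = 1" "\<forall>i<l. P i = 0" using assms(2) unfolding proj_points_def by auto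
  have "\<not> j < l" using j l scaled by (metis mult_zero_right zero_neq_one)
  moreover have "\<not> l < j" using j l scaled by (metis mult_1_right mult_zero_left zero_neq_one)
  ultimately show ?thesis using j l scaled by (metis mult_1_right nat_neq_iff)
qed

lemma prod_eq_indicator_if_supported:
  fixes x y :: "nat \<Rightarrow> 'b::zero"
  assumes "\<forall>i>n. x i = 0" "\<forall>i>n. y i = 0"
  shows "(\<Prod>i\<le>n. if x i = y i then 1 else 0) = (if x = y then 1 else (0::'a::field))"
proof (cases "x = y")
  case False
  then obtain i where i: "x i \<noteq> y i" by auto
  with assms have "i \<le> n" by (cases "i \<le> n") auto
  with i show ?thesis by (intro trans[OF prod_zero]) auto
qed simp

lemma proj_point_delta:
  fixes x P :: "nat \<Rightarrow> 'a::{finite,field}"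
  assumes x: "x \<in> proj_points n" and P: "P \<in> proj_points n"
  shows "(if x = P then 1 else 0)
    = (\<Sum>c\<in>UNIV - {0}. c ^ k * (\<Prod>i\<le>n. if x i = c * P i then 1 else 0))"
proof -
  have "c ^ k * (\<Prod>i\<le>n. if x i = c * P i then 1 else 0) = (if c = 1 \<and> x = P then 1 else 0)"
    for c :: 'a
  proof -
    have "(\<Prod>i\<le>n. if x i = c * P i then 1 else 0) = (if x = (\<lambda>i. c * P i) then 1 else (0::'a))"
      using x P by (intro prod_eq_indicator_if_supported) (auto simp: proj_points_def)
    thus ?thesis using proj_points_scale_eq_1[OF x P, of c] by auto
  qed
  thus ?thesis by (simp add: sum.delta)
qed

definition moment :: "nat \<Rightarrow> ((nat \<Rightarrow> 'a::field) \<Rightarrow> 'a) \<Rightarrow> (nat \<Rightarrow> nat) \<Rightarrow> 'a" where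
  "moment n v \<beta> = (\<Sum>P\<in>proj_points n. v P * (\<Prod>i\<le>n. P i ^ \<beta> i))"

lemma proj_interpolation:
  fixes v :: "(nat \<Rightarrow> 'a::{finite,field}) \<Rightarrow> 'a"
  defines "q \<equiv> CARD('a)"
  assumes x: "x \<in> proj_points n"
  shows "v x = (\<Sum>s\<in>PiE {..n} (\<lambda>_. {..q}). expansion_sign q n s
      * (\<Sum>c\<in>UNIV - {0::'a}. c ^ (k + (\<Sum>i\<le>n. right_exp q n s i)))
      * moment n v (right_exp q n s) * (\<Prod>i\<le>n. x i ^ left_exp q n s i))"
proof -
  let ?S = "PiE {..n} (\<lambda>_. {..q})"
  let ?N = "UNIV - {0::'a}"
  define X where "X s = (\<Prod>i\<le>n. x i ^ left_exp q n s i)" for s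
  define Y where "Y s P = (\<Prod>i\<le>n. P i ^ right_exp q n s i)" for s and P :: "nat \<Rightarrow> 'a"
  define B where "B s = (\<Sum>i\<le>n. right_exp q n s i)" for s
  have scaled: "(\<Prod>i\<le>n. if x i = c * P i then 1 else 0)
      = (\<Sum>s\<in>?S. expansion_sign q n s * X s * (c ^ B s * Y s P))" for c P
    using prod_eq_indicator_expansion[of x "\<lambda>i. c * P i" n]
    by (simp add: X_def Y_def B_def q_def power_mult_distrib prod.distrib power_sum)
  have "v x = (\<Sum>P\<in>proj_points n. v P * (if x = P then 1 else 0))"
    using x finite_proj_points[where 'a='a]
    by (simp add: if_distrib[of "\<lambda>y. _ * y"] sum.delta' cong: if_cong)
  also have "\<dots> = (\<Sum>P\<in>proj_points n. v P *
      (\<Sum>c\<in>?N. c ^ k * (\<Sum>s\<in>?S. expansion_sign q n s * X s * (c ^ B s * Y s P))))"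
    by (intro sum.cong refl arg_cong[where f="\<lambda>y. v _ * y"])
      (simp add: proj_point_delta[OF x, where k=k] scaled del: sum.delta)
  also have "\<dots> = (\<Sum>P\<in>proj_points n. \<Sum>c\<in>?N. \<Sum>s\<in>?S.
      expansion_sign q n s * X s * c ^ (k + B s) * (v P * Y s P))"
    by (simp add: sum_distrib_left mult_ac power_add)
  also have "\<dots> = (\<Sum>P\<in>proj_points n. \<Sum>s\<in>?S. \<Sum>c\<in>?N.
      expansion_sign q n s * X s * c ^ (k + B s) * (v P * Y s P))"
    by (intro sum.cong refl sum.swap)
  also have "\<dots> = (\<Sum>s\<in>?S. \<Sum>P\<in>proj_points n. \<Sum>c\<in>?N.
      expansion_sign q n s * X s * c ^ (k + B s) * (v P * Y s P))"
    by (rule sum.swap)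
  also have "\<dots> = (\<Sum>s\<in>?S. expansion_sign q n s * (\<Sum>c\<in>?N. c ^ (k + B s))
      * moment n v (right_exp q n s) * X s)"
    by (simp add: moment_def Y_def sum_distrib_left sum_distrib_right mult_ac)
  finally show ?thesis unfolding X_def B_def .
qed

lemma finite_monomials: "finite (monomials n k)"
proof (rule finite_subset)
  show "monomials n k \<subseteq>
      {f. \<forall>i. (i \<in> {..n} \<longrightarrow> f i \<in> {..k}) \<and> (i \<notin> {..n} \<longrightarrow> f i = 0)}"
  proof
    fix e assume e: "e \<in> monomials n k"
    have "e i \<le> k" if "i \<le> n" for i
    proof -
      have "e i \<le> (\<Sum>i\<le>n. e i)" using that by (intro member_le_sum) auto
      thus ?thesis using e unfolding monomials_def by simp
    qed
    thus "e \<in> {f. \<forall>i. (i \<in> {..n} \<longrightarrow> f i \<in> {..k}) \<and> (i \<notin> {..n} \<longrightarrow> f i = 0)}"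
      using e unfolding monomials_def by auto
  qed
  show "finite
      {f::nat \<Rightarrow> nat. \<forall>i. (i \<in> {..n} \<longrightarrow> f i \<in> {..k}) \<and> (i \<notin> {..n} \<longrightarrow> f i = 0)}"
    by (rule finite_set_of_finite_funs) auto
qed

lemma hom_eval_monomial:
  assumes "m \<in> monomials n k"
  shows "hom_eval n k (\<lambda>e. if e = m then c else 0) p = c * (\<Prod>i\<le>n. p i ^ m i)"
  unfolding hom_eval_def using assms finite_monomials[of n k]
  by (simp add: if_distrib[of "\<lambda>x. x * _"] sum.delta' cong: if_cong)

lemma moment_eq_0_if_in_dual:
  fixes v :: "(nat \<Rightarrow> 'a::field) \<Rightarrow> 'a"
  assumes v: "v \<in> dual_code n (proj_RM n k)" and m: "m \<in> monomials n k"
  shows "moment n v m = 0"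
proof -
  define w where "w p = (if p \<in> proj_points n then hom_eval n k (\<lambda>e. if e = m then 1 else 0) p else 0 :: 'a)"
    for p
  have "w \<in> proj_RM n k" unfolding w_def[abs_def] proj_RM_def by blast
  hence "dotp n v w = 0" using v unfolding dual_code_def by blast
  moreover have "dotp n v w = moment n v m"
    unfolding dotp_def moment_def w_def using hom_eval_monomial[OF m, of 1] by (intro sum.cong) auto
  ultimately show ?thesis by simp
qed

lemma monomial_raise_degree:
  fixes m :: "nat \<Rightarrow> nat"
  assumes supp: "\<forall>i>n. m i = 0" and deg: "0 < (\<Sum>i\<le>n. m i)" "(\<Sum>i\<le>n. m i) \<le> k"
    and dvd: "(CARD('a::{finite,field}) - 1) dvd (k - (\<Sum>i\<le>n. m i))"
  shows "\<exists>m'\<in>monomials n k. \<forall>p::nat \<Rightarrow> 'a. (\<Prod>i\<le>n. p i ^ m' i) = (\<Prod>i\<le>n. p i ^ m i)"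
proof -
  obtain i0 where i0: "i0 \<le> n" "m i0 \<noteq> 0" using deg(1) by (metis atMost_iff less_irrefl sum.neutral)
  obtain j where j: "k - (\<Sum>i\<le>n. m i) = (CARD('a) - 1) * j" using dvd by (auto elim: dvdE)
  define m' where "m' i = m i + (if i = i0 then k - (\<Sum>i\<le>n. m i) else 0)" for i
  have "(\<Sum>i\<le>n. m' i) = k" unfolding m'_def using i0 deg by (simp add: sum.distrib)
  hence "m' \<in> monomials n k" unfolding monomials_def using supp i0 by (auto simp: m'_def)
  moreover have "p i ^ m' i = p i ^ m i" for p :: "nat \<Rightarrow> 'a" and i
  proof (cases "i = i0 \<and> p i \<noteq> 0")
    case True
    hence "p i ^ m' i = p i ^ m i * p i ^ ((CARD('a) - 1) * j)" by (simp add: m'_def j power_add)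
    thus ?thesis using power_mult_CARD_minus_1[of "p i" j] True by auto
  qed (use i0 in \<open>auto simp: m'_def power_0_left\<close>)
  ultimately show ?thesis by (auto intro!: bexI[where x=m'] prod.cong)
qed

lemma in_proj_RM_if_combination:
  fixes v :: "(nat \<Rightarrow> 'a::field) \<Rightarrow> 'a" and f :: "'s \<Rightarrow> (nat \<Rightarrow> 'a) \<Rightarrow> 'a"
  assumes "finite S"
    and lift: "\<And>s. s \<in> S \<Longrightarrow> c s \<noteq> 0 \<Longrightarrow>
      \<exists>m\<in>monomials n k. \<forall>p. (\<Prod>i\<le>n. p i ^ m i) = f s p"
    and on_points: "\<And>x. x \<in> proj_points n \<Longrightarrow> v x = (\<Sum>s\<in>S. c s * f s x)"
    and off_points: "\<And>x. x \<notin> proj_points n \<Longrightarrow> v x = 0"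
  shows "v \<in> proj_RM n k"
proof -
  have "\<forall>s. \<exists>m. s \<in> S \<longrightarrow> c s \<noteq> 0 \<longrightarrow>
      m \<in> monomials n k \<and> (\<forall>p. (\<Prod>i\<le>n. p i ^ m i) = f s p)"
    using lift by blast
  then obtain mon where mon: "\<And>s. s \<in> S \<Longrightarrow> c s \<noteq> 0 \<Longrightarrow>
      mon s \<in> monomials n k \<and> (\<forall>p. (\<Prod>i\<le>n. p i ^ mon s i) = f s p)"
    by metis
  define a where "a e = (\<Sum>s\<in>S. if c s \<noteq> 0 \<and> mon s = e then c s else 0)" for e
  have "hom_eval n k a x = (\<Sum>s\<in>S. c s * f s x)" for x
  proof -
    have "hom_eval n k a x = (\<Sum>s\<in>S. \<Sum>e\<in>monomials n k.
        if c s \<noteq> 0 \<and> mon s = e then c s * (\<Prod>i\<le>n. x i ^ e i) else 0)"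
      unfolding hom_eval_def a_def
      by (subst sum.swap) (simp add: sum_distrib_right if_distrib[of "\<lambda>y. y * _"] cong: if_cong)
    also have "\<dots> = (\<Sum>s\<in>S. c s * f s x)"
    proof (intro sum.cong refl)
      fix s assume "s \<in> S"
      with mon finite_monomials[of n k]
      show "(\<Sum>e\<in>monomials n k. if c s \<noteq> 0 \<and> mon s = e then c s * (\<Prod>i\<le>n. x i ^ e i) else 0)
          = c s * f s x"
        by (cases "c s = 0") (simp_all add: sum.delta')
    qed
    finally show ?thesis .
  qed
  hence "v = (\<lambda>p. if p \<in> proj_points n then hom_eval n k a p else 0)"
    using on_points off_points by auto
  thus ?thesis unfolding proj_RM_def by blast
qed

subsection \<open>The dual code is contained in the code\<close>

lemma complementary_degree_bounds:
  fixes Q a b c k n :: nat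
  assumes "Q > 0" and ab: "a + b = Q * c" and "c \<le> n + 1"
    and "Q * n \<le> 2 * k" and "b > k" and "Q dvd (k + b)" and "\<not> Q dvd k"
  shows "0 < a \<and> a \<le> k \<and> Q dvd (k - a)"
proof -
  have "Q * c \<le> Q * (n + 1)" using assms(3) by (rule mult_le_mono2)
  hence lt: "a < k + Q" using assms ab by (simp add: algebra_simps)
  obtain j where j: "k + b = Q * j" using assms(6) by (auto elim: dvdE)
  have "int a - int k = int Q * (int c - int j)"
    using arg_cong[OF ab, of int] arg_cong[OF j, of int] by (simp add: algebra_simps)
  hence dvd: "int Q dvd (int k - int a)" by (metis dvd_diff_commute dvd_triv_left)
  have "a \<le> k"
  proof (rule ccontr)
    assume "\<not> a \<le> k"
    hence "0 < int a - int k" "int a - int k < int Q" using lt by auto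
    thus False using dvd zdvd_not_zless by (metis dvd_diff_commute)
  qed
  hence "Q dvd (k - a)" using dvd by (simp add: of_nat_diff[symmetric] del: of_nat_diff)
  thus ?thesis using \<open>a \<le> k\<close> assms(7) by (metis diff_zero gr0I)
qed

lemma monomial_raise_degree_if_coefficient_ne_0:
  fixes v :: "(nat \<Rightarrow> 'a::{finite,field}) \<Rightarrow> 'a"
  defines "q \<equiv> CARD('a)"
  assumes v: "v \<in> dual_code n (proj_RM n k)"
    and n: "(q - 1) * n \<le> 2 * k" and two_k: "(q - 1) dvd 2 * k" and k: "\<not> (q - 1) dvd k"
    and ne_0: "(\<Sum>c\<in>UNIV - {0::'a}. c ^ (k + (\<Sum>i\<le>n. right_exp q n s i)))
      * moment n v (right_exp q n s) \<noteq> 0"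
  shows "\<exists>m\<in>monomials n k.
    \<forall>p::nat \<Rightarrow> 'a. (\<Prod>i\<le>n. p i ^ m i) = (\<Prod>i\<le>n. p i ^ left_exp q n s i)"
proof -
  define a where "a = (\<Sum>i\<le>n. left_exp q n s i)"
  define b where "b = (\<Sum>i\<le>n. right_exp q n s i)"
  have q: "q \<ge> 2" unfolding q_def by (rule CARD_field_ge_2)
  have "(\<Sum>c\<in>UNIV - {0::'a}. c ^ (k + b)) \<noteq> 0" using ne_0 unfolding b_def by auto
  hence kb: "(q - 1) dvd (k + b)" using sum_nonzero_power_eq_0[where 'a='a] unfolding q_def by blast
  have "b > k"
  proof (rule ccontr)
    assume "\<not> b > k"
    hence "k - b = 2 * k - (k + b)" by simp
    hence "(q - 1) dvd (k - b)" using dvd_diff_nat[OF two_k kb] by simp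
    moreover have "0 < b" using kb k by (metis add_0_right gr0I)
    ultimately obtain m where "m \<in> monomials n k"
      "\<forall>p::nat \<Rightarrow> 'a. (\<Prod>i\<le>n. p i ^ m i) = (\<Prod>i\<le>n. p i ^ right_exp q n s i)"
      using monomial_raise_degree[of n "right_exp q n s" k] \<open>\<not> b > k\<close>
      unfolding b_def q_def by (auto simp: right_exp_def)
    hence "moment n v (right_exp q n s) = moment n v m" unfolding moment_def by simp
    hence "moment n v (right_exp q n s) = 0"
      using moment_eq_0_if_in_dual[OF v \<open>m \<in> monomials n k\<close>] by simp
    thus False using ne_0 by simp
  qed
  have ab: "a + b = (q - 1) * card {i. i \<le> n \<and> s i < q}"
    unfolding a_def b_def using q by (intro sum_left_exp_plus_sum_right_exp) simp
  have "card {i. i \<le> n \<and> s i < q} \<le> card {..n}" by (intro card_mono) auto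
  hence card: "card {i. i \<le> n \<and> s i < q} \<le> n + 1" by simp
  have "0 < a \<and> a \<le> k \<and> (q - 1) dvd (k - a)"
    using q by (intro complementary_degree_bounds[OF _ ab card n \<open>b > k\<close> kb k]) simp
  moreover have "\<forall>i>n. left_exp q n s i = 0" by (simp add: left_exp_def)
  ultimately show ?thesis
    using monomial_raise_degree[of n "left_exp q n s" k] unfolding a_def q_def by blast
qed

lemma dual_code_subset_proj_RM:
  fixes n k :: nat
  defines "q \<equiv> CARD('a::{finite,field})"
  assumes hyps: "(q - 1) * n \<le> 2 * k" "(q - 1) dvd 2 * k" "\<not> (q - 1) dvd k"
  shows "dual_code n (proj_RM n k :: ((nat \<Rightarrow> 'a) \<Rightarrow> 'a) set) \<subseteq> proj_RM n k"
proof
  fix v :: "(nat \<Rightarrow> 'a) \<Rightarrow> 'a"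
  assume v: "v \<in> dual_code n (proj_RM n k)"
  define L where "L s = (\<Sum>c\<in>UNIV - {0::'a}. c ^ (k + (\<Sum>i\<le>n. right_exp q n s i)))" for s
  show "v \<in> proj_RM n k"
  proof (rule in_proj_RM_if_combination)
    show "finite (PiE {..n} (\<lambda>_. {..q}))" by (rule finite_PiE) auto
    show "\<exists>m\<in>monomials n k.
        \<forall>p::nat \<Rightarrow> 'a. (\<Prod>i\<le>n. p i ^ m i) = (\<Prod>i\<le>n. p i ^ left_exp q n s i)"
      if "expansion_sign q n s * L s * moment n v (right_exp q n s) \<noteq> 0" for s
      using monomial_raise_degree_if_coefficient_ne_0[OF v hyps[unfolded q_def]] that
      unfolding q_def L_def by auto
    show "v x = (\<Sum>s\<in>PiE {..n} (\<lambda>_. {..q}).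
        expansion_sign q n s * L s * moment n v (right_exp q n s) * (\<Prod>i\<le>n. x i ^ left_exp q n s i))"
      if "x \<in> proj_points n" for x
      using proj_interpolation[OF that] unfolding q_def L_def .
    show "v x = 0" if "x \<notin> proj_points n" for x
      using v that unfolding dual_code_def by blast
  qed
qed

lemma self_orthogonal_dual_code_if_subset:
  assumes "dual_code n C \<subseteq> C"
  shows "self_orthogonal n (dual_code n C)"
  using assms unfolding self_orthogonal_def dual_code_def by blast

theorem mainTheorem6:
  fixes n k q :: nat
  assumes "q = card (UNIV :: ('a::{finite,field}) set)"
    and "n \<ge> 1"
    and "n * (q - 1) \<le> 2 * k" and "k \<le> n * (q - 1)"
    and "(2 * k) mod (q - 1) = 0" and "k mod (q - 1) \<noteq> 0"
  shows "self_orthogonal n (dual_code n (proj_RM n k :: ((nat \<Rightarrow> 'a) \<Rightarrow> 'a) set))"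
proof -
  have "dual_code n (proj_RM n k :: ((nat \<Rightarrow> 'a) \<Rightarrow> 'a) set) \<subseteq> proj_RM n k"
    using assms(1,3,5,6)
    by (intro dual_code_subset_proj_RM) (simp_all add: mult.commute dvd_eq_mod_eq_0)
  thus ?thesis by (rule self_orthogonal_dual_code_if_subset)
qed

end
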